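(* Let $t \in \mathbb{Q}_2$ with $|t - 1| \le 2^{-5}$ (i.e. $t \equiv 1 \pmod{32}$). Let $z \in \mathbb{Q}_2$ lie in $\overline{D}(\tfrac{19}{2}, 2^{-4})$ or in $\overline{D}(\tfrac{27}{2}, 2^{-4})$. Then the forward orbit of $z$ under $f_t$ is bounded.
   Context: Let $|\cdot|$ denote the $2$-adic absolute value on $\mathbb{C}_2$, normalized by $|2| = 1/2$. The notation $\overline{D}(a,\delta)$ denotes the closed disk $\{z \in \mathbb{C}_2 : |z-a| \le \delta\}$. For $t \in \mathbb{C}_2$, let $f_t(z) = -\tfrac32 t(-2z^3+3z^2)+1$. *)

theory Defs
  imports Complex_Main
begin

text \<open>An element of Z_2 is a compatible sequence of residues: x n is the residue
  of the 2-adic integer modulo 2^n, normalised to lie in [0, 2^n).\<close>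

definition z2_seqs :: "(nat \<Rightarrow> int) set" where
  "z2_seqs = {x. \<forall>n. 0 \<le> x n \<and> x n < 2 ^ n \<and> x (Suc n) mod 2 ^ n = x n}"

typedef Z2 = z2_seqs
  unfolding z2_seqs_def by (rule exI[of _ "\<lambda>_. 0"]) simp

definition z2_of_int :: "int \<Rightarrow> Z2" where
  "z2_of_int i = Abs_Z2 (\<lambda>n. i mod 2 ^ n)"

definition z2_add :: "Z2 \<Rightarrow> Z2 \<Rightarrow> Z2" where
  "z2_add a b = Abs_Z2 (\<lambda>n. (Rep_Z2 a n + Rep_Z2 b n) mod 2 ^ n)"

definition z2_mul :: "Z2 \<Rightarrow> Z2 \<Rightarrow> Z2" where
  "z2_mul a b = Abs_Z2 (\<lambda>n. (Rep_Z2 a n * Rep_Z2 b n) mod 2 ^ n)"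

definition z2_neg :: "Z2 \<Rightarrow> Z2" where
  "z2_neg a = Abs_Z2 (\<lambda>n. (- Rep_Z2 a n) mod 2 ^ n)"

text \<open>2-adic valuation of a nonzero 2-adic integer: the largest n with x = 0 mod 2^n.\<close>
definition z2_val :: "Z2 \<Rightarrow> nat" where
  "z2_val a = (LEAST n. Rep_Z2 a (Suc n) \<noteq> 0)"

text \<open>An element of Q_2 is represented by a pair (k, u) standing for u / 2^k with
  u in Z_2.  Every element of Q_2 has such representations (not unique); all
  notions below (arithmetic, absolute value) are compatible with this.\<close>

type_synonym Q2 = "nat \<times> Z2"

definition q2_of_int :: "int \<Rightarrow> Q2" where
  "q2_of_int i = (0, z2_of_int i)"

definition q2_dyadic :: "int \<Rightarrow> nat \<Rightarrow> Q2" where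
  "q2_dyadic a k = (k, z2_of_int a)"

fun q2_add :: "Q2 \<Rightarrow> Q2 \<Rightarrow> Q2" where
  "q2_add (k, u) (l, v) =
     (k + l, z2_add (z2_mul u (z2_of_int (2 ^ l))) (z2_mul v (z2_of_int (2 ^ k))))"

fun q2_mul :: "Q2 \<Rightarrow> Q2 \<Rightarrow> Q2" where
  "q2_mul (k, u) (l, v) = (k + l, z2_mul u v)"

fun q2_neg :: "Q2 \<Rightarrow> Q2" where
  "q2_neg (k, u) = (k, z2_neg u)"

definition q2_sub :: "Q2 \<Rightarrow> Q2 \<Rightarrow> Q2" where
  "q2_sub x y = q2_add x (q2_neg y)"

fun q2_abs :: "Q2 \<Rightarrow> real" where
  "q2_abs (k, u) =
     (if u = z2_of_int 0 then 0 else 2 powr (real k - real (z2_val u)))"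

definition q2_cdisk :: "Q2 \<Rightarrow> real \<Rightarrow> Q2 set" where
  "q2_cdisk a \<delta> = {z. q2_abs (q2_sub z a) \<le> \<delta>}"

definition f2 :: "Q2 \<Rightarrow> Q2 \<Rightarrow> Q2" where
  "f2 t z =
     q2_add
       (q2_mul (q2_neg (q2_dyadic 3 1))
          (q2_mul t
             (q2_add (q2_mul (q2_of_int (-2)) (q2_mul z (q2_mul z z)))
                     (q2_mul (q2_of_int 3) (q2_mul z z)))))
       (q2_of_int 1)"

end

theory Submission
  imports Defs
begin

text \<open>For t = 1 mod 32 the map f_t sends the residue class
  19/2 + 16 Z_2 into 3 + 4 Z_2, the class 27/2 + 16 Z_2 into 2 + 4 Z_2, the class
  2 + 4 Z_2 into 3 + 4 Z_2, and 3 + 4 Z_2 back into 19/2 + 16 Z_2. The union of these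
  four classes is therefore forward invariant, and all of it lies in the disk |z| \<le> 2.
  Each transition is a congruence between integer polynomials: writing z = x/X and
  t = y/P, the numerator of f_t(z) is computed on residues of x and y modulo 2^n.\<close>

lemma Rep_Z2_mod_self: "Rep_Z2 u n mod 2^n = Rep_Z2 u n"
  using Rep_Z2[of u] unfolding z2_seqs_def by auto

lemma Rep_Z2_Suc_mod: "Rep_Z2 u (Suc n) mod 2^n = Rep_Z2 u n"
  using Rep_Z2[of u] unfolding z2_seqs_def by auto

lemma Rep_Z2_mod: "n \<le> m \<Longrightarrow> Rep_Z2 u m mod 2^n = Rep_Z2 u n"
proof (induction m rule: dec_induct)
  case base then show ?case by (rule Rep_Z2_mod_self)
next
  case (step m)
  then show ?case
    by (metis Rep_Z2_Suc_mod le_imp_power_dvd mod_mod_cancel)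
qed

lemma Rep_Abs_Z2_mod:
  assumes "\<And>n. x (Suc n) mod 2^n = x n mod (2::int)^n"
  shows "Rep_Z2 (Abs_Z2 (\<lambda>n. x n mod 2^n)) n = x n mod 2^n"
proof -
  have "(\<lambda>n. x n mod 2^n) \<in> z2_seqs"
    using assms by (simp add: z2_seqs_def mod_mod_cancel le_imp_power_dvd)
  then show ?thesis by (simp add: Abs_Z2_inverse)
qed

lemma Rep_z2_of_int [simp]: "Rep_Z2 (z2_of_int i) n = i mod 2^n"
  unfolding z2_of_int_def
  by (rule Rep_Abs_Z2_mod) (simp add: mod_mod_cancel le_imp_power_dvd)

lemma Rep_z2_add [simp]: "Rep_Z2 (z2_add a b) n = (Rep_Z2 a n + Rep_Z2 b n) mod 2^n"
  unfolding z2_add_def by (rule Rep_Abs_Z2_mod) (metis mod_add_eq Rep_Z2_Suc_mod)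

lemma Rep_z2_mul [simp]: "Rep_Z2 (z2_mul a b) n = (Rep_Z2 a n * Rep_Z2 b n) mod 2^n"
  unfolding z2_mul_def by (rule Rep_Abs_Z2_mod) (metis mod_mult_eq Rep_Z2_Suc_mod)

lemma Rep_z2_neg [simp]: "Rep_Z2 (z2_neg a) n = (- Rep_Z2 a n) mod 2^n"
  unfolding z2_neg_def by (rule Rep_Abs_Z2_mod) (metis mod_minus_eq Rep_Z2_Suc_mod)

lemma Rep_Z2_0 [simp]: "Rep_Z2 u 0 = 0"
  using Rep_Z2_mod_self[of u 0] by simp

lemma z2_nonzero_has_nonzero_residue:
  assumes "u \<noteq> z2_of_int 0"
  shows "\<exists>n. Rep_Z2 u (Suc n) \<noteq> 0"
proof (rule ccontr)
  assume "\<not> ?thesis"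
  then have "Rep_Z2 u n = Rep_Z2 (z2_of_int 0) n" for n
    by (cases n) simp_all
  then show False
    using assms Rep_Z2_inject by blast
qed

lemma Rep_Z2_eq_0_iff_le_val:
  assumes "u \<noteq> z2_of_int 0"
  shows "Rep_Z2 u j = 0 \<longleftrightarrow> j \<le> z2_val u"
proof
  have val: "Rep_Z2 u (Suc (z2_val u)) \<noteq> 0"
    unfolding z2_val_def using z2_nonzero_has_nonzero_residue[OF assms] by (rule LeastI_ex)
  assume "Rep_Z2 u j = 0"
  then show "j \<le> z2_val u"
    using val Rep_Z2_mod[of "Suc (z2_val u)" j u] by (cases "Suc (z2_val u) \<le> j") auto
next
  assume "j \<le> z2_val u"
  then show "Rep_Z2 u j = 0"
  proof (cases j)
    case (Suc i)
    then have "i < (LEAST n. Rep_Z2 u (Suc n) \<noteq> 0)"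
      using \<open>j \<le> z2_val u\<close> by (simp add: z2_val_def)
    then show ?thesis
      using Suc not_less_Least by blast
  qed simp
qed

lemma q2_abs_le_powr_iff: "q2_abs (k, w) \<le> 2 powr (real k - real j) \<longleftrightarrow> Rep_Z2 w j = 0"
proof (cases "w = z2_of_int 0")
  case False
  then show ?thesis
    by (simp add: Rep_Z2_eq_0_iff_le_val)
qed simp

lemma Rep_Z2_lift:
  assumes "Rep_Z2 u m = x mod 2^m"
  shows "\<exists>q. Rep_Z2 u n = (x + 2^m * q) mod 2^n"
proof (cases "n \<le> m")
  case True
  then have "Rep_Z2 u n = x mod 2^n"
    using assms Rep_Z2_mod[of n m u] by (simp add: mod_mod_cancel le_imp_power_dvd)
  then show ?thesis by (intro exI[of _ 0]) simp
next
  case False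
  then have "2^m dvd Rep_Z2 u n - x"
    using assms Rep_Z2_mod[of m n u] by (simp add: mod_eq_dvd_iff[symmetric])
  then obtain q where "Rep_Z2 u n = x + 2^m * q"
    by (metis dvdE diff_add_cancel add.commute)
  then show ?thesis
    by (metis Rep_Z2_mod_self)
qed

text \<open>f_t(x/X) = f2_numer X P x y / (2 P X^5) for t = y/P.\<close>
definition f2_numer :: "int \<Rightarrow> int \<Rightarrow> int \<Rightarrow> int \<Rightarrow> int" where
  "f2_numer X P x y = - 3 * y * (- 2 * x^3 * X^2 + 3 * x^2 * X^3) + 2 * P * X^5"

lemma fst_f2: "fst (f2 (kt, ut) (k, u)) = Suc (kt + 5 * k)"
  by (simp add: f2_def q2_dyadic_def q2_of_int_def)

lemma Rep_snd_f2:
  assumes "Rep_Z2 u n = x mod 2^n" "Rep_Z2 ut n = y mod 2^n"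
  shows "Rep_Z2 (snd (f2 (kt, ut) (k, u))) n = f2_numer (2^k) (2^kt) x y mod 2^n"
proof -
  have "Rep_Z2 (snd (f2 (kt, ut) (k, u))) n =
      (- 3 * (y * (- 2 * (x * (x * x)) * 2 ^ (k + k) + 3 * (x * x) * 2 ^ (k + (k + k))))
       + 2 * 2 ^ (kt + (k + (k + k) + (k + k)))) mod 2^n"
    using assms
    by (simp add: f2_def q2_dyadic_def q2_of_int_def mod_add_left_eq mod_add_right_eq
        mod_mult_left_eq mod_mult_right_eq mod_minus_eq)
  also have "\<dots> = f2_numer (2^k) (2^kt) x y mod 2^n"
    unfolding f2_numer_def power_add by (rule arg_cong[where f = "\<lambda>v. v mod 2^n"]) algebra
  finally show ?thesis .
qed

text \<open>z \<equiv> c/2^e (mod 2^m), read off the representative z = u/2^k: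
  u lies in 2^(k-e) (c + 2^(e+m) Z_2), i.e. every residue of u has that form.\<close>
definition q2_cong :: "Q2 \<Rightarrow> int \<Rightarrow> nat \<Rightarrow> nat \<Rightarrow> bool" where
  "q2_cong z c e m \<longleftrightarrow> e \<le> fst z \<and>
     (\<forall>n. \<exists>a. Rep_Z2 (snd z) n = 2^(fst z - e) * (c + 2^(e + m) * a) mod 2^n)"

lemma q2_cong_if_abs_le:
  assumes "odd c" and "q2_abs (q2_sub z (q2_dyadic c e)) \<le> 2 powr - real m"
  shows "q2_cong z c e m"
proof -
  obtain k u where z: "z = (k, u)" by fastforce
  define N where "N = k + e + m"
  define w where "w = z2_add (z2_mul u (z2_of_int (2^e))) (z2_mul (z2_neg (z2_of_int c)) (z2_of_int (2^k)))"
  have "q2_sub z (q2_dyadic c e) = (k + e, w)"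
    by (simp add: z w_def q2_sub_def q2_dyadic_def)
  moreover have "2 powr - real m = 2 powr (real (k + e) - real N)"
    by (simp add: N_def)
  ultimately have "q2_abs (k + e, w) \<le> 2 powr (real (k + e) - real N)"
    using assms(2) by metis
  then have "Rep_Z2 w N = 0"
    by (rule q2_abs_le_powr_iff[THEN iffD1])
  then have dvd: "2^N dvd 2^e * Rep_Z2 u N - c * 2^k"
    by (simp add: w_def mod_simps mod_eq_0_iff_dvd mult.commute)
  have "e \<le> k" \<comment> \<open>otherwise 2^(k+1) would divide c 2^k\<close>
  proof (rule ccontr)
    assume "\<not> e \<le> k"
    then have "Suc k \<le> e" "Suc k \<le> N"
      by (simp_all add: N_def)
    then have "(2::int)^Suc k dvd 2^e" "(2::int)^Suc k dvd 2^N"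
      by (simp_all only: le_imp_power_dvd)
    then have "2^Suc k dvd 2^e * Rep_Z2 u N - (2^e * Rep_Z2 u N - c * 2^k)"
      using dvd by (meson dvd_diff dvd_mult2 dvd_trans)
    then have "2 * 2^k dvd c * 2^k"
      by simp
    then show False
      using assms(1) by simp
  qed
  then have "2^e * 2^(k + m) dvd 2^e * (Rep_Z2 u N - 2^(k - e) * c)"
    using dvd by (simp add: N_def algebra_simps flip: power_add)
  then have "Rep_Z2 u N mod 2^(k + m) = 2^(k - e) * c mod 2^(k + m)"
    by (simp add: mod_eq_dvd_iff)
  then have residue: "Rep_Z2 u (k + m) = 2^(k - e) * c mod 2^(k + m)"
    using Rep_Z2_mod[of "k + m" N u] by (simp add: N_def)
  have "\<exists>a. Rep_Z2 u n = 2^(k - e) * (c + 2^(e + m) * a) mod 2^n" for n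
  proof -
    obtain q where "Rep_Z2 u n = (2^(k - e) * c + 2^(k + m) * q) mod 2^n"
      using Rep_Z2_lift[OF residue] by blast
    moreover have "2^(k - e) * c + 2^(k + m) * q = 2^(k - e) * (c + 2^(e + m) * q)"
      using \<open>e \<le> k\<close> by (simp add: algebra_simps flip: power_add)
    ultimately show ?thesis
      by metis
  qed
  then show ?thesis
    using \<open>e \<le> k\<close> by (simp add: q2_cong_def z)
qed

lemma q2_abs_le_if_cong:
  assumes "q2_cong z c e m"
  shows "q2_abs z \<le> 2 powr e"
proof -
  obtain k u where z: "z = (k, u)" by fastforce
  obtain a where "Rep_Z2 u (k - e) = 2^(k - e) * (c + 2^(e + m) * a) mod 2^(k - e)"
    using assms unfolding q2_cong_def z fst_conv snd_conv by blast
  then have "Rep_Z2 u (k - e) = 0"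
    by simp
  then have "q2_abs z \<le> 2 powr (real k - real (k - e))"
    unfolding z by (rule q2_abs_le_powr_iff[THEN iffD2])
  then show ?thesis
    using assms by (simp add: q2_cong_def z)
qed

lemma f2_numer_homogeneous: "f2_numer (l * X) (p * P) (l * x) (p * y) = l^5 * p * f2_numer X P x y"
  unfolding f2_numer_def by algebra

lemma q2_cong_f2:
  assumes t: "q2_cong t 1 0 5" and z: "q2_cong z c e m" and "e' \<le> 1 + 5 * e"
    and numer: "\<And>a b. \<exists>q. f2_numer (2^e) 1 (c + 2^(e + m) * a) (1 + 32 * b)
                           = 2^(1 + 5 * e - e') * (c' + 2^(e' + m') * q)"
  shows "q2_cong (f2 t z) c' e' m'"
proof -
  obtain kt ut k u where tz: "t = (kt, ut)" "z = (k, u)" by fastforce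
  have "e \<le> k"
    using z by (simp add: q2_cong_def tz)
  define l :: int where "l = 2^(k - e)"
  have "\<exists>q. Rep_Z2 u' n = 2^(Suc (kt + 5 * k) - e') * (c' + 2^(e' + m') * q) mod 2^n"
    if u': "u' = snd (f2 t z)" for u' n
  proof -
    obtain a where a: "Rep_Z2 u n = (l * (c + 2^(e + m) * a)) mod 2^n"
      using z by (auto simp: q2_cong_def tz l_def)
    obtain b where b: "Rep_Z2 ut n = (2^kt * (1 + 32 * b)) mod 2^n"
      using t by (auto simp: q2_cong_def tz)
    obtain q where q: "f2_numer (2^e) 1 (c + 2^(e + m) * a) (1 + 32 * b)
                         = 2^(1 + 5 * e - e') * (c' + 2^(e' + m') * q)"
      using numer by blast
    have "(2::int)^k = l * 2^e"
      using \<open>e \<le> k\<close> by (simp add: l_def flip: power_add)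
    then have "Rep_Z2 u' n = l^5 * 2^kt * f2_numer (2^e) 1 (c + 2^(e + m) * a) (1 + 32 * b) mod 2^n"
      using Rep_snd_f2[OF a b] f2_numer_homogeneous[of l "2^e" "2^kt" 1] by (simp add: u' tz)
    also have "l^5 * 2^kt * 2^(1 + 5 * e - e') = (2::int)^(Suc (kt + 5 * k) - e')"
      using \<open>e \<le> k\<close> \<open>e' \<le> 1 + 5 * e\<close>
      by (simp add: l_def flip: power_mult power_add)
    then have "l^5 * 2^kt * f2_numer (2^e) 1 (c + 2^(e + m) * a) (1 + 32 * b)
                 = 2^(Suc (kt + 5 * k) - e') * (c' + 2^(e' + m') * q)"
      by (simp add: q mult.assoc)
    finally show ?thesis
      by blast
  qed
  moreover have "e' \<le> Suc (kt + 5 * k)"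
    using \<open>e \<le> k\<close> \<open>e' \<le> 1 + 5 * e\<close> by linarith
  ultimately show ?thesis
    by (simp add: q2_cong_def tz fst_f2)
qed

lemma q2_cong_f2_19_2:
  assumes "q2_cong t 1 0 5" and "q2_cong z 19 1 4"
  shows "q2_cong (f2 t z) 3 0 2"
proof (rule q2_cong_f2[OF assms])
  show "\<exists>q. f2_numer (2^1) 1 (19 + 2^(1 + 4) * a) (1 + 32 * b) = 2^(1 + 5 * 1 - 0) * (3 + 2^(0 + 2) * q)"
    for a b :: int
    by (rule exI[of _ "541 + 17328 * b + 2907 * a + 93024 * a * b + 5184 * a^2 + 165888 * a^2 * b
          + 3072 * a^3 + 98304 * a^3 * b"])
      (simp add: f2_numer_def algebra_simps power2_eq_square power3_eq_cube)
qed simp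

lemma q2_cong_f2_27_2:
  assumes "q2_cong t 1 0 5" and "q2_cong z 27 1 4"
  shows "q2_cong (f2 t z) 2 0 2"
proof (rule q2_cong_f2[OF assms])
  show "\<exists>q. f2_numer (2^1) 1 (27 + 2^(1 + 4) * a) (1 + 32 * b) = 2^(1 + 5 * 1 - 0) * (2 + 2^(0 + 2) * q)"
    for a b :: int
    by (rule exI[of _ "1640 + 52488 * b + 6075 * a + 194400 * a * b + 7488 * a^2 + 239616 * a^2 * b
          + 3072 * a^3 + 98304 * a^3 * b"])
      (simp add: f2_numer_def algebra_simps power2_eq_square power3_eq_cube)
qed simp

lemma q2_cong_f2_2_3:
  assumes "q2_cong t 1 0 5" and "q2_cong z 2 0 2"
  shows "q2_cong (f2 t z) 3 0 2"
proof (rule q2_cong_f2[OF assms])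
  show "\<exists>q. f2_numer (2^0) 1 (2 + 2^(0 + 2) * a) (1 + 32 * b) = 2^(1 + 5 * 0 - 0) * (3 + 2^(0 + 2) * q)"
    for a b :: int
    by (rule exI[of _ "1 + 48 * b + 18 * a + 576 * a * b + 54 * a^2 + 1728 * a^2 * b
          + 48 * a^3 + 1536 * a^3 * b"])
      (simp add: f2_numer_def algebra_simps power2_eq_square power3_eq_cube)
qed simp

lemma q2_cong_f2_3_19:
  assumes "q2_cong t 1 0 5" and "q2_cong z 3 0 2"
  shows "q2_cong (f2 t z) 19 1 4"
proof (rule q2_cong_f2[OF assms])
  fix a b :: int
  obtain r where r: "a^2 + a = 2 * r"
    by (metis even_mult_iff even_add power2_eq_square dvdE)
  show "\<exists>q. f2_numer (2^0) 1 (3 + 2^(0 + 2) * a) (1 + 32 * b) = 2^(1 + 5 * 0 - 1) * (19 + 2^(1 + 4) * q)"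
    by (rule exI[of _ "2 + 81 * b + 45 * r - 9 * a + 432 * a * b + 720 * a^2 * b + 12 * a^3 + 384 * a^3 * b"])
      (use r in \<open>simp add: f2_numer_def; algebra\<close>)
qed simp

definition f2_trap :: "Q2 \<Rightarrow> bool" where
  "f2_trap z \<longleftrightarrow> q2_cong z 19 1 4 \<or> q2_cong z 27 1 4 \<or> q2_cong z 2 0 2 \<or> q2_cong z 3 0 2"

lemma f2_trap_f2: "q2_cong t 1 0 5 \<Longrightarrow> f2_trap z \<Longrightarrow> f2_trap (f2 t z)"
  unfolding f2_trap_def
  using q2_cong_f2_19_2 q2_cong_f2_27_2 q2_cong_f2_2_3 q2_cong_f2_3_19 by blast

lemma q2_abs_le_if_f2_trap: "f2_trap z \<Longrightarrow> q2_abs z \<le> 2"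
  unfolding f2_trap_def using q2_abs_le_if_cong by fastforce

theorem mainTheorem6:
  fixes t z :: Q2
  assumes "q2_abs (q2_sub t (q2_of_int 1)) \<le> 2 powr (-5)"
    and "z \<in> q2_cdisk (q2_dyadic 19 1) (2 powr (-4)) \<or> z \<in> q2_cdisk (q2_dyadic 27 1) (2 powr (-4))"
  shows "\<exists>B. \<forall>n. q2_abs ((f2 t ^^ n) z) \<le> B"
proof -
  have t: "q2_cong t 1 0 5"
    using assms(1) by (intro q2_cong_if_abs_le) (simp_all add: q2_of_int_def q2_dyadic_def)
  have "f2_trap z"
    using assms(2) q2_cong_if_abs_le[of 19 z 1 4] q2_cong_if_abs_le[of 27 z 1 4]
    by (auto simp: q2_cdisk_def f2_trap_def)
  then have "f2_trap ((f2 t ^^ n) z)" for n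
    by (induction n) (simp_all add: f2_trap_f2[OF t])
  then show ?thesis
    using q2_abs_le_if_f2_trap by blast
qed

end
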